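(* Consider the inexact Bregman proximal point algorithm described in the context, with $\Phi$ Legendre and $0\le\rho_k\le\rho<1$ for all $k$. Assume that there exists $z^\star\in\operatorname{zer}T\cap\operatorname{int}\operatorname{dom}\Phi$ such that $D_\Phi(z^\star,\cdot)$ is coercive (this holds, e.g., if $\operatorname{dom}\Phi^*$ is open). Then there exists $z^\infty\in\operatorname{zer}T\cap\operatorname{int}\operatorname{dom}\Phi$ such that $z^k\to z^\infty$, $p^k\to z^\infty$ and $w^k\to0$.
   Context: Let $\mathbb{E}$ be a finite-dimensional Euclidean space, $\Gamma_0(\mathbb{E})$ the proper lsc convex functions $\mathbb{E}\to\mathbb{R}\cup\{+\infty\}$. $\Phi\in\Gamma_0(\mathbb{E})$ is Legendre if it is essentially smooth ($\operatorname{int}\operatorname{dom}\Phi\ne\emptyset$, differentiable there, $\|\nabla\Phi(z^\nu)\|\to\infty$ whenever $\operatorname{int}\operatorname{dom}\Phi\ni z^\nu\to z\in\operatorname{bdry}\operatorname{dom}\Phi$) and essentially strictly convex (strictly convex on every convex subset of $\operatorname{dom}\partial\Phi$); then $\nabla\Phi:\operatorname{int}\operatorname{dom}\Phi\to\operatorname{int}\operatorname{dom}\Phi^*$ is a bijection with inverse $\nabla\Phi^*$. $D_\Phi(z_1,z_2)=\Phi(z_1)-\Phi(z_2)-\langle\nabla\Phi(z_2),z_1-z_2\rangle$ if $z_1\in\operatorname{dom}\Phi$, $z_2\in\operatorname{int}\operatorname{dom}\Phi$, and $+\infty$ otherwise. Let $T:\mathbb{E}\rightrightarrows\mathbb{E}$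 be maximal monotone, $\operatorname{zer}T=T^{-1}(0)$, and assume $\operatorname{int}\operatorname{dom}\Phi\cap\operatorname{dom}T\ne\emptyset$. Inexact Bregman proximal point algorithm: given $z^0\in\operatorname{int}\operatorname{dom}\Phi$, step sizes $\sigma_k\ge\sigma>0$ and tolerances $\rho_k\in[0,1)$, it generates for $k=0,1,\dots$ triples $(z^{k+1},p^k,w^k)$ with $p^k\in\operatorname{dom}\Phi$, $w^k\in T(p^k)$, $\nabla\Phi(z^k)-\sigma_kw^k\in\operatorname{int}\operatorname{dom}\Phi^*$, $z^{k+1}=\nabla\Phi^*(\nabla\Phi(z^k)-\sigma_kw^k)\in\operatorname{int}\operatorname{dom}\Phi$, and $D_\Phi(p^k,z^{k+1})\le\rho_kD_\Phi(p^k,z^k)$. A function $h$ is coercive if $h(z)\to\infty$ as $\|z\|\to\infty$. *)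

theory Defs
  imports "HOL-Analysis.Analysis" "HOL-Library.Extended_Real"
begin

text \<open>Functions E -> R \<union> {+\<infinity>} are modelled as 'a => ereal (never taking -\<infinity> when proper).\<close>

definition edom :: "('a \<Rightarrow> ereal) \<Rightarrow> 'a set" where
  "edom f = {x. f x < \<infinity>}"

definition proper_fun :: "('a \<Rightarrow> ereal) \<Rightarrow> bool" where
  "proper_fun f \<longleftrightarrow> (\<forall>x. f x \<noteq> -\<infinity>) \<and> (\<exists>x. f x < \<infinity>)"

definition lsc_fun :: "('a::metric_space \<Rightarrow> ereal) \<Rightarrow> bool" where
  "lsc_fun f \<longleftrightarrow> (\<forall>x s. s \<longlonglongrightarrow> x \<longrightarrow> f x \<le> liminf (\<lambda>n. f (s n)))"

definition econvex :: "('a::real_vector \<Rightarrow> ereal) \<Rightarrow> bool" where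
  "econvex f \<longleftrightarrow> (\<forall>x y t. 0 < t \<and> t < 1 \<longrightarrow>
      f ((1 - t) *\<^sub>R x + t *\<^sub>R y) \<le> ereal (1 - t) * f x + ereal t * f y)"

definition Gamma0 :: "('a::euclidean_space \<Rightarrow> ereal) set" where
  "Gamma0 = {f. proper_fun f \<and> lsc_fun f \<and> econvex f}"

text \<open>Gradient at x (meaningful where f is finite near x and differentiable).\<close>
definition egrad :: "('a::euclidean_space \<Rightarrow> ereal) \<Rightarrow> 'a \<Rightarrow> 'a" where
  "egrad f x = (SOME g. ((\<lambda>y. real_of_ereal (f y)) has_derivative (\<lambda>h. g \<bullet> h)) (at x))"

definition ediff_at :: "('a::euclidean_space \<Rightarrow> ereal) \<Rightarrow> 'a \<Rightarrow> bool" where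
  "ediff_at f x \<longleftrightarrow> (\<exists>g. ((\<lambda>y. real_of_ereal (f y)) has_derivative (\<lambda>h. g \<bullet> h)) (at x))"

definition conj_fun :: "('a::euclidean_space \<Rightarrow> ereal) \<Rightarrow> 'a \<Rightarrow> ereal" where
  "conj_fun f y = (SUP x. ereal (x \<bullet> y) - f x)"

definition subdiff :: "('a::euclidean_space \<Rightarrow> ereal) \<Rightarrow> 'a \<Rightarrow> 'a set" where
  "subdiff f x = {g. f x \<noteq> \<infinity> \<and> f x \<noteq> -\<infinity> \<and>
      (\<forall>y. f x + ereal (g \<bullet> (y - x)) \<le> f y)}"

definition essentially_smooth :: "('a::euclidean_space \<Rightarrow> ereal) \<Rightarrow> bool" where
  "essentially_smooth f \<longleftrightarrow>
     interior (edom f) \<noteq> {} \<and>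
     (\<forall>x \<in> interior (edom f). ediff_at f x) \<and>
     (\<forall>s z. (\<forall>n. s n \<in> interior (edom f)) \<and> s \<longlonglongrightarrow> z \<and> z \<in> frontier (edom f)
        \<longrightarrow> filterlim (\<lambda>n. norm (egrad f (s n))) at_top sequentially)"

definition strictly_convex_on_set :: "'a::real_vector set \<Rightarrow> ('a \<Rightarrow> ereal) \<Rightarrow> bool" where
  "strictly_convex_on_set C f \<longleftrightarrow> (\<forall>x\<in>C. \<forall>y\<in>C. \<forall>t. x \<noteq> y \<and> 0 < t \<and> t < 1 \<longrightarrow>
      f ((1 - t) *\<^sub>R x + t *\<^sub>R y) < ereal (1 - t) * f x + ereal t * f y)"

definition essentially_strictly_convex :: "('a::euclidean_space \<Rightarrow> ereal) \<Rightarrow> bool" where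
  "essentially_strictly_convex f \<longleftrightarrow>
     (\<forall>C. convex C \<and> C \<subseteq> {x. subdiff f x \<noteq> {}} \<longrightarrow> strictly_convex_on_set C f)"

definition legendre :: "('a::euclidean_space \<Rightarrow> ereal) \<Rightarrow> bool" where
  "legendre f \<longleftrightarrow> f \<in> Gamma0 \<and> essentially_smooth f \<and> essentially_strictly_convex f"

definition bregman :: "('a::euclidean_space \<Rightarrow> ereal) \<Rightarrow> 'a \<Rightarrow> 'a \<Rightarrow> ereal" where
  "bregman f z1 z2 = (if z1 \<in> edom f \<and> z2 \<in> interior (edom f)
      then f z1 - f z2 - ereal (egrad f z2 \<bullet> (z1 - z2)) else \<infinity>)"

definition monotone_op :: "('a::euclidean_space \<Rightarrow> 'a set) \<Rightarrow> bool" where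
  "monotone_op T \<longleftrightarrow> (\<forall>x y u v. u \<in> T x \<and> v \<in> T y \<longrightarrow> 0 \<le> (u - v) \<bullet> (x - y))"

definition maximal_monotone :: "('a::euclidean_space \<Rightarrow> 'a set) \<Rightarrow> bool" where
  "maximal_monotone T \<longleftrightarrow> monotone_op T \<and>
     (\<forall>x u. (\<forall>y v. v \<in> T y \<longrightarrow> 0 \<le> (u - v) \<bullet> (x - y)) \<longrightarrow> u \<in> T x)"

definition op_dom :: "('a \<Rightarrow> 'b set) \<Rightarrow> 'a set" where
  "op_dom T = {x. T x \<noteq> {}}"

definition zer :: "('a \<Rightarrow> 'b::zero set) \<Rightarrow> 'a set" where
  "zer T = {x. 0 \<in> T x}"

definition coercive :: "('a::real_normed_vector \<Rightarrow> ereal) \<Rightarrow> bool" where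
  "coercive h \<longleftrightarrow> (\<forall>M::real. \<exists>R. \<forall>z. R \<le> norm z \<longrightarrow> ereal M \<le> h z)"

end

theory Submission
  imports Defs
begin

(* Fejer monotonicity in the Bregman distance D: for every zero u of T,
   D(u, z (k+1)) <= D(u, z k) - (1 - rho) D(p k, z k), by the three-point identity for D,
   the gradient step grad Phi (z (k+1)) = grad Phi (z k) - sigma_k w k and monotonicity of T.
   Coercivity of D(zs, _) bounds the iterates, and essential smoothness keeps the closure of
   the orbit inside int dom Phi: a compact set on which grad Phi is uniformly continuous and
   D(b, a) -> 0 forces b - a -> 0. Hence p k - z k -> 0 and w k -> 0, every cluster point is a
   zero of T by maximality, and Fejer monotonicity with respect to a cluster point gives
   convergence of the whole sequence. Essential strict convexity enters twice: D(b, a) = 0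
   only for b = a, and it makes the conjugate differentiable on the interior of its domain
   with grad Phi (grad Phi* y) = y, which turns the update formula into the gradient step. *)

lemma egrad_eqI:
  fixes F :: "'a::euclidean_space \<Rightarrow> ereal"
  assumes "((\<lambda>y. real_of_ereal (F y)) has_derivative (\<lambda>h. g \<bullet> h)) (at x)"
  shows "egrad F x = g"
proof -
  have "((\<lambda>y. real_of_ereal (F y)) has_derivative (\<lambda>h. egrad F x \<bullet> h)) (at x)"
    unfolding egrad_def by (rule someI[of _ g]) (fact assms)
  from has_derivative_unique[OF this assms]
  have "egrad F x \<bullet> (egrad F x - g) = g \<bullet> (egrad F x - g)" by meson
  then have "(egrad F x - g) \<bullet> (egrad F x - g) = 0" by (simp add: inner_diff_left)
  then show ?thesis by simp
qed

lemma has_derivative_egrad: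
  "ediff_at F x \<Longrightarrow> ((\<lambda>y. real_of_ereal (F y)) has_derivative (\<lambda>h. egrad F x \<bullet> h)) (at x)"
  unfolding ediff_at_def egrad_def by (rule someI_ex)

lemma has_derivative_inner_if_remainder:
  fixes F :: "'a::real_inner \<Rightarrow> real"
  assumes rem: "\<forall>\<^sub>F v in at y. \<bar>F v - F y - x \<bullet> (v - y)\<bar> \<le> g v * norm (v - y)"
    and g: "(g \<longlongrightarrow> 0) (at y)"
  shows "(F has_derivative (\<lambda>h. x \<bullet> h)) (at y)"
  unfolding has_derivative_iff_norm
proof
  show "bounded_linear ((\<bullet>) x)"
    by (rule bounded_linear_inner_right)
  have "\<forall>\<^sub>F v in at y. norm (norm (F v - F y - x \<bullet> (v - y)) / norm (v - y)) \<le> g v"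
    using rem eventually_neq_at_within[of y y UNIV]
  proof eventually_elim
    case (elim v)
    then show ?case
      by (simp add: pos_divide_le_eq)
  qed
  then show "((\<lambda>v. norm (F v - F y - x \<bullet> (v - y)) / norm (v - y)) \<longlongrightarrow> 0) (at y)"
    using g by (rule Lim_null_comparison)
qed

lemma tendsto_if_unique_cluster_point:
  fixes X :: "nat \<Rightarrow> 'a::metric_space"
  assumes K: "compact K" "\<forall>\<^sub>F n in sequentially. X n \<in> K"
    and cluster: "\<And>r l. strict_mono r \<Longrightarrow> (X \<circ> r) \<longlonglongrightarrow> l \<Longrightarrow> l = a"
  shows "X \<longlonglongrightarrow> a"
proof (rule ccontr)
  assume "\<not> X \<longlonglongrightarrow> a"
  then obtain e where e: "e > 0" and "\<not> (\<forall>\<^sub>F n in sequentially. dist (X n) a < e)"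
    unfolding tendsto_iff by blast
  then have "\<exists>\<^sub>F n in sequentially. \<not> dist (X n) a < e"
    by (simp add: not_eventually)
  then have "\<exists>\<^sub>F n in sequentially. X n \<in> K \<and> \<not> dist (X n) a < e"
    using K(2) by (rule frequently_eventually_conj)
  then have "infinite {n. X n \<in> K \<and> \<not> dist (X n) a < e}"
    by (metis (mono_tags) cofinite_eq_sequentially frequently_cofinite)
  then obtain r :: "nat \<Rightarrow> nat" where r: "strict_mono r" "\<And>n. X (r n) \<in> K \<and> \<not> dist (X (r n)) a < e"
    using infinite_enumerate by blast
  have "\<forall>n. (X \<circ> r) n \<in> K"
    using r(2) by simp
  from seq_compactE[OF compact_imp_seq_compact[OF K(1)] this]
  obtain l s where s: "strict_mono s" "((X \<circ> r) \<circ> s) \<longlonglongrightarrow> l"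
    by blast
  have "l = a"
    using cluster[of "r \<circ> s" l] r(1) s by (simp add: strict_mono_o o_assoc)
  then have "\<forall>\<^sub>F n in sequentially. dist (X (r (s n))) a < e"
    using s(2) e by (simp add: tendsto_iff o_def)
  then show False
    using r(2) by (auto dest: eventually_happens')
qed

lemma maximal_monotoneD:
  assumes "maximal_monotone T" "u \<in> T x" "v \<in> T y"
  shows "0 \<le> (u - v) \<bullet> (x - y)"
proof -
  have "monotone_op T"
    using assms(1) by (simp add: maximal_monotone_def)
  then show ?thesis
    using assms(2,3) unfolding monotone_op_def by blast
qed

lemma maximal_monotone_limit:
  assumes T: "maximal_monotone T" and w: "\<And>n. w n \<in> T (p n)"
    and lim: "p \<longlonglongrightarrow> x" "w \<longlonglongrightarrow> u"
  shows "u \<in> T x"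
proof -
  have "0 \<le> (u - v) \<bullet> (x - y)" if v: "v \<in> T y" for y v
  proof (rule tendsto_lowerbound)
    show "(\<lambda>n. (w n - v) \<bullet> (p n - y)) \<longlonglongrightarrow> (u - v) \<bullet> (x - y)"
      by (intro tendsto_intros lim)
    show "\<forall>\<^sub>F n in sequentially. 0 \<le> (w n - v) \<bullet> (p n - y)"
      by (intro always_eventually allI maximal_monotoneD[OF T w v])
  qed simp
  then show ?thesis
    using T unfolding maximal_monotone_def by blast
qed

section \<open>Legendre functions and their Bregman distance\<close>

locale legendre_function =
  fixes Phi :: "'a::euclidean_space \<Rightarrow> ereal"
  assumes legendre: "legendre Phi"
begin

(* real_of_ereal sends \<infinity> to 0, so phi is meaningful only on edom Phi *)
definition phi :: "'a \<Rightarrow> real" where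
  "phi x = real_of_ereal (Phi x)"

abbreviation int_dom :: "'a set" where
  "int_dom \<equiv> interior (edom Phi)"

abbreviation grad :: "'a \<Rightarrow> 'a" where
  "grad \<equiv> egrad Phi"

definition breg :: "'a \<Rightarrow> 'a \<Rightarrow> real" where
  "breg u a = phi u - phi a - grad a \<bullet> (u - a)"

lemma Phi_proper: "proper_fun Phi"
  and Phi_lsc: "lsc_fun Phi"
  and Phi_convex: "econvex Phi"
  and Phi_smooth: "essentially_smooth Phi"
  and Phi_strictly_convex: "essentially_strictly_convex Phi"
  using legendre unfolding legendre_def Gamma0_def by auto

lemma Phi_eq_phi: "x \<in> edom Phi \<Longrightarrow> Phi x = ereal (phi x)"
  using Phi_proper unfolding proper_fun_def edom_def phi_def by (cases "Phi x") auto

lemma Phi_notin_edom: "x \<notin> edom Phi \<Longrightarrow> Phi x = \<infinity>"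
  unfolding edom_def by simp

lemma edom_nonempty: "edom Phi \<noteq> {}"
  using Phi_proper unfolding proper_fun_def edom_def by auto

lemma int_dom_subset: "int_dom \<subseteq> edom Phi"
  by (rule interior_subset)

lemma phi_convex_comb:
  assumes "a \<in> edom Phi" "b \<in> edom Phi" "0 \<le> t" "t \<le> 1"
  shows "(1 - t) *\<^sub>R a + t *\<^sub>R b \<in> edom Phi"
    and "phi ((1 - t) *\<^sub>R a + t *\<^sub>R b) \<le> (1 - t) * phi a + t * phi b"
proof -
  have "Phi ((1 - t) *\<^sub>R a + t *\<^sub>R b) \<le> ereal ((1 - t) * phi a + t * phi b)"
  proof (cases "t = 0 \<or> t = 1")
    case True
    then show ?thesis using assms Phi_eq_phi by auto
  next
    case False
    then have "Phi ((1 - t) *\<^sub>R a + t *\<^sub>R b) \<le> ereal (1 - t) * Phi a + ereal t * Phi b"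
      using Phi_convex assms(3,4) unfolding econvex_def by simp
    then show ?thesis using assms(1,2) by (simp add: Phi_eq_phi)
  qed
  moreover from this show "(1 - t) *\<^sub>R a + t *\<^sub>R b \<in> edom Phi"
    unfolding edom_def using le_less_trans by fastforce
  ultimately show "phi ((1 - t) *\<^sub>R a + t *\<^sub>R b) \<le> (1 - t) * phi a + t * phi b"
    by (simp add: Phi_eq_phi)
qed

lemma has_derivative_phi: "x \<in> int_dom \<Longrightarrow> (phi has_derivative (\<lambda>h. grad x \<bullet> h)) (at x)"
  using has_derivative_egrad Phi_smooth unfolding essentially_smooth_def phi_def[abs_def] by blast

lemma isCont_phi: "x \<in> int_dom \<Longrightarrow> isCont phi x"
  using has_derivative_phi has_derivative_continuous by blast

lemma phi_gradient_ineq: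
  assumes x: "x \<in> int_dom" and u: "u \<in> edom Phi"
  shows "phi x + grad x \<bullet> (u - x) \<le> phi u"
proof -
  define g where "g t = phi (x + t *\<^sub>R (u - x))" for t :: real
  have "((\<lambda>t. x + t *\<^sub>R (u - x)) has_derivative (\<lambda>t. t *\<^sub>R (u - x))) (at 0)"
    by (auto intro!: derivative_eq_intros)
  moreover have "(phi has_derivative (\<lambda>h. grad x \<bullet> h)) (at (x + 0 *\<^sub>R (u - x)))"
    using has_derivative_phi[OF x] by simp
  ultimately have "(g has_derivative (\<lambda>t. grad x \<bullet> (t *\<^sub>R (u - x)))) (at 0)"
    unfolding g_def by (rule has_derivative_compose)
  then have "(g has_field_derivative grad x \<bullet> (u - x)) (at 0)"
    unfolding has_field_derivative_def by (rule has_derivative_eq_rhs) (simp add: fun_eq_iff)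
  then have "((\<lambda>t. (g t - g 0) / t) \<longlongrightarrow> grad x \<bullet> (u - x)) (at_right 0)"
    by (auto simp: has_field_derivative_iff intro: filterlim_mono at_within_le_at)
  moreover have "\<forall>\<^sub>F t in at_right 0. (g t - g 0) / t \<le> phi u - phi x"
    unfolding eventually_at_right_field
  proof (intro exI[of _ 1] conjI allI impI)
    fix t :: real
    assume t: "0 < t" "t < 1"
    have "x + t *\<^sub>R (u - x) = (1 - t) *\<^sub>R x + t *\<^sub>R u"
      by (simp add: algebra_simps)
    then have "g t \<le> (1 - t) * phi x + t * phi u"
      unfolding g_def using phi_convex_comb(2)[of x u t] x u t int_dom_subset by auto
    then have "g t - g 0 \<le> t * (phi u - phi x)"
      by (simp add: g_def algebra_simps)
    then show "(g t - g 0) / t \<le> phi u - phi x"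
      using t by (simp add: divide_le_eq mult.commute)
  qed simp
  ultimately have "grad x \<bullet> (u - x) \<le> phi u - phi x"
    by (rule tendsto_upperbound) simp
  then show ?thesis by simp
qed

lemma breg_nonneg: "a \<in> int_dom \<Longrightarrow> u \<in> edom Phi \<Longrightarrow> 0 \<le> breg u a"
  using phi_gradient_ineq unfolding breg_def by fastforce

lemma bregman_eq_breg: "u \<in> edom Phi \<Longrightarrow> a \<in> int_dom \<Longrightarrow> bregman Phi u a = ereal (breg u a)"
  unfolding bregman_def breg_def using Phi_eq_phi int_dom_subset by auto

lemma breg_three_point:
  "breg u a' - breg u a - (breg v a' - breg v a) = (grad a - grad a') \<bullet> (u - v)"
  unfolding breg_def by (simp add: inner_diff_right inner_diff_left algebra_simps)

lemma grad_eqI: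
  assumes x: "x \<in> int_dom" and subgrad: "\<And>u. u \<in> edom Phi \<Longrightarrow> phi x + g \<bullet> (u - x) \<le> phi u"
  shows "grad x = g"
proof -
  define h where "h u = phi u - g \<bullet> u" for u
  have "(h has_derivative (\<lambda>v. grad x \<bullet> v - g \<bullet> v)) (at x)"
    unfolding h_def using has_derivative_phi[OF x] by (auto intro!: derivative_eq_intros)
  moreover have "\<forall>\<^sub>F y in at x. h x \<le> h y"
  proof -
    have "\<forall>\<^sub>F y in at x. y \<in> int_dom"
      by (rule eventually_at_in_open'[OF open_interior x])
    then show ?thesis
      by eventually_elim (use subgrad int_dom_subset in \<open>force simp: h_def inner_diff_right\<close>)
  qed
  ultimately have "(\<lambda>v. grad x \<bullet> v - g \<bullet> v) = (\<lambda>v. 0)"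
    by (rule has_derivative_local_min)
  then have "(grad x - g) \<bullet> (grad x - g) = 0"
    by (metis inner_diff_left)
  then show ?thesis by simp
qed

(* otherwise Phi is affine on [x1, x2] with g as a subgradient at every point of it,
   contradicting essential strict convexity *)
lemma affine_minorant_contact_unique:
  assumes minorant: "\<And>u. u \<in> edom Phi \<Longrightarrow> c + g \<bullet> u \<le> phi u"
    and x1: "x1 \<in> edom Phi" "phi x1 = c + g \<bullet> x1"
    and x2: "x2 \<in> edom Phi" "phi x2 = c + g \<bullet> x2"
  shows "x1 = x2"
proof (rule ccontr)
  assume ne: "x1 \<noteq> x2"
  have on_segment: "x \<in> edom Phi \<and> phi x = c + g \<bullet> x" if x: "x \<in> closed_segment x1 x2" for x
  proof -
    obtain t where t: "0 \<le> t" "t \<le> 1" "x = (1 - t) *\<^sub>R x1 + t *\<^sub>R x2"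
      using x by (auto simp: in_segment)
    have "(1 - t) * phi x1 + t * phi x2 = c + g \<bullet> x"
      unfolding x1(2) x2(2) t(3) by (simp add: algebra_simps inner_add_right)
    then show ?thesis
      using phi_convex_comb[OF x1(1) x2(1) t(1,2)] minorant t(3) by force
  qed
  have "g \<in> subdiff Phi x" if "x \<in> closed_segment x1 x2" for x
  proof -
    have "Phi x + ereal (g \<bullet> (y - x)) \<le> Phi y" for y
    proof (cases "y \<in> edom Phi")
      case True
      then show ?thesis
        using on_segment[OF that] minorant[OF True]
        by (simp add: Phi_eq_phi inner_diff_right)
    qed (simp add: Phi_notin_edom)
    then show ?thesis
      using on_segment[OF that] Phi_eq_phi unfolding subdiff_def by auto
  qed
  then have strict: "strictly_convex_on_set (closed_segment x1 x2) Phi"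
    using Phi_strictly_convex unfolding essentially_strictly_convex_def by blast
  have "Phi ((1 - 1/2) *\<^sub>R x1 + (1/2) *\<^sub>R x2) < ereal (1 - 1/2) * Phi x1 + ereal (1/2) * Phi x2"
    by (rule strict[unfolded strictly_convex_on_set_def, rule_format]) (use ne in auto)
  moreover have "(1 - 1/2) *\<^sub>R x1 + (1/2::real) *\<^sub>R x2 \<in> closed_segment x1 x2"
    unfolding closed_segment_def by (auto intro!: exI[of _ "1/2"])
  ultimately show False
    using on_segment x1 x2 by (simp add: Phi_eq_phi algebra_simps inner_add_right add_divide_distrib)
qed

lemma phi_lsc_bound:
  assumes s: "s \<longlonglongrightarrow> x" and b: "b \<longlonglongrightarrow> B"
    and le: "\<And>n. s n \<in> edom Phi" "\<And>n. phi (s n) \<le> b n"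
  shows "x \<in> edom Phi" and "phi x \<le> B"
proof -
  have "Phi x \<le> liminf (\<lambda>n. Phi (s n))"
    using Phi_lsc s unfolding lsc_fun_def by blast
  also have "\<dots> \<le> liminf (\<lambda>n. ereal (b n))"
    by (rule Liminf_mono) (use le Phi_eq_phi in auto)
  also have "\<dots> = ereal B"
    by (rule lim_imp_Liminf) (use b in auto)
  finally have *: "Phi x \<le> ereal B" .
  then show "x \<in> edom Phi"
    unfolding edom_def using le_less_trans by fastforce
  with * show "phi x \<le> B"
    by (simp add: Phi_eq_phi)
qed

lemma norm_grad_le_breg:
  assumes x: "x \<in> int_dom"
  obtains r where "r > 0" "\<And>y. y \<in> int_dom \<Longrightarrow> r * norm (grad y) - 1 \<le> breg x y"
proof -
  obtain d where d: "d > 0" "\<And>y. y \<noteq> x \<Longrightarrow> norm (y - x) < d \<Longrightarrow> norm (phi y - phi x) < 1"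
    using isCont_phi[OF x] unfolding isCont_def LIM_eq by (meson zero_less_one)
  obtain e where e: "e > 0" "ball x e \<subseteq> int_dom"
    using x open_interior open_contains_ball by blast
  define r where "r = min d e / 2"
  have r: "r > 0" "r < d" "r < e"
    using d e unfolding r_def by auto
  have "r * norm (grad y) - 1 \<le> breg x y" if y: "y \<in> int_dom" for y
  proof -
    define u where "u = (if grad y = 0 then x else x + (r / norm (grad y)) *\<^sub>R grad y)"
    have u_near: "norm (u - x) \<le> r"
      using r unfolding u_def by auto
    then have "u \<in> int_dom"
      using r e by (auto simp: dist_norm norm_minus_commute)
    then have "phi y + grad y \<bullet> (u - y) \<le> phi u"
      using phi_gradient_ineq[OF y] int_dom_subset by blast
    moreover have "phi u < phi x + 1"
      using d(2)[of u] u_near r by (cases "u = x") auto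
    moreover have "grad y \<bullet> (u - y) = grad y \<bullet> (x - y) + r * norm (grad y)"
      unfolding u_def
      by (simp add: inner_diff_right inner_add_right dot_square_norm power2_eq_square)
    ultimately show ?thesis
      unfolding breg_def by simp
  qed
  with r(1) show ?thesis by (rule that)
qed

lemma grad_eventually_bounded:
  assumes x: "x \<in> int_dom" and ys: "\<And>n. ys n \<in> int_dom" "ys \<longlonglongrightarrow> x"
  obtains B where "\<forall>\<^sub>F n in sequentially. norm (grad (ys n)) \<le> B"
proof -
  obtain r where r: "r > 0" "\<And>y. y \<in> int_dom \<Longrightarrow> r * norm (grad y) - 1 \<le> breg x y"
    using norm_grad_le_breg[OF x] by blast
  have bound: "norm (grad (ys n)) \<le> 4 / r"
    if near: "dist (ys n) x < r / 2" "dist (phi (ys n)) (phi x) < 1" for n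
  proof -
    have "grad (ys n) \<bullet> (ys n - x) \<le> norm (grad (ys n)) * norm (ys n - x)"
      by (rule norm_cauchy_schwarz)
    also have "\<dots> \<le> norm (grad (ys n)) * (r / 2)"
      using near(1) by (intro mult_left_mono) (auto simp: dist_norm)
    also have "\<dots> = r * norm (grad (ys n)) / 2"
      by simp
    finally have "grad (ys n) \<bullet> (ys n - x) \<le> r * norm (grad (ys n)) / 2" .
    moreover have "r * norm (grad (ys n)) - 1 \<le> phi x - phi (ys n) + grad (ys n) \<bullet> (ys n - x)"
      using r(2)[OF ys(1)[of n]] unfolding breg_def by (simp add: inner_diff_right)
    ultimately have "r * norm (grad (ys n)) \<le> 4"
      using near(2) unfolding dist_real_def by linarith
    then show ?thesis
      using r(1) by (simp add: field_simps)
  qed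
  have "\<forall>\<^sub>F n in sequentially. dist (ys n) x < r / 2"
    using tendstoD[OF ys(2), of "r / 2"] r(1) by simp
  moreover have "\<forall>\<^sub>F n in sequentially. dist (phi (ys n)) (phi x) < 1"
    using isCont_tendsto_compose[OF isCont_phi[OF x] ys(2)] by (simp add: tendsto_iff)
  ultimately have "\<forall>\<^sub>F n in sequentially. norm (grad (ys n)) \<le> 4 / r"
    by eventually_elim (rule bound)
  then show ?thesis
    by (rule that)
qed

lemma grad_tendsto:
  assumes x: "x \<in> int_dom" and ys: "\<And>n. ys n \<in> int_dom" "ys \<longlonglongrightarrow> x"
  shows "(\<lambda>n. grad (ys n)) \<longlonglongrightarrow> grad x"
proof -
  obtain B where "\<forall>\<^sub>F n in sequentially. norm (grad (ys n)) \<le> B"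
    using grad_eventually_bounded[OF x ys] by blast
  then have "\<forall>\<^sub>F n in sequentially. grad (ys n) \<in> cball 0 B"
    by simp
  then show ?thesis
  proof (rule tendsto_if_unique_cluster_point[OF compact_cball])
    fix q g
    assume q: "strict_mono q" "((\<lambda>n. grad (ys n)) \<circ> q) \<longlonglongrightarrow> g"
    have ys_lim: "(\<lambda>n. ys (q n)) \<longlonglongrightarrow> x"
      using LIMSEQ_subseq_LIMSEQ[OF ys(2) q(1)] by (simp add: o_def)
    have phi_lim: "(\<lambda>n. phi (ys (q n))) \<longlonglongrightarrow> phi x"
      using isCont_tendsto_compose[OF isCont_phi[OF x] ys_lim] .
    have grad_lim: "(\<lambda>n. grad (ys (q n))) \<longlonglongrightarrow> g"
      using q(2) by (simp add: o_def)
    have "grad x = g"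
    proof (rule grad_eqI[OF x])
      fix u
      assume u: "u \<in> edom Phi"
      show "phi x + g \<bullet> (u - x) \<le> phi u"
      proof (rule tendsto_upperbound)
        show "(\<lambda>n. phi (ys (q n)) + grad (ys (q n)) \<bullet> (u - ys (q n))) \<longlonglongrightarrow> phi x + g \<bullet> (u - x)"
          by (intro tendsto_intros phi_lim grad_lim ys_lim)
        show "\<forall>\<^sub>F n in sequentially. phi (ys (q n)) + grad (ys (q n)) \<bullet> (u - ys (q n)) \<le> phi u"
          using phi_gradient_ineq[OF ys(1) u] by simp
      qed simp
    qed
    then show "g = grad x" ..
  qed
qed

lemma continuous_on_grad: "continuous_on int_dom grad"
  by (rule continuous_on_sequentiallyI) (simp add: grad_tendsto)

lemma isCont_grad: "x \<in> int_dom \<Longrightarrow> isCont grad x"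
  using continuous_on_grad continuous_on_eq_continuous_at open_interior by blast

lemma breg_convex_comb:
  assumes a: "a \<in> int_dom" and b: "b \<in> edom Phi" and t: "0 \<le> t" "t \<le> 1"
  shows "breg ((1 - t) *\<^sub>R a + t *\<^sub>R b) a \<le> t * breg b a"
proof -
  have "(1 - t) *\<^sub>R a + t *\<^sub>R b - a = t *\<^sub>R (b - a)"
    by (simp add: algebra_simps)
  moreover have "phi ((1 - t) *\<^sub>R a + t *\<^sub>R b) \<le> (1 - t) * phi a + t * phi b"
    using phi_convex_comb(2)[OF _ b t] a int_dom_subset by blast
  ultimately show ?thesis
    unfolding breg_def by (simp add: algebra_simps)
qed

lemma breg_nonpos_imp_eq:
  assumes a: "a \<in> int_dom" and b: "b \<in> edom Phi" and "breg b a \<le> 0"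
  shows "b = a"
proof (rule affine_minorant_contact_unique[where c = "phi a - grad a \<bullet> a" and g = "grad a"])
  show "phi a - grad a \<bullet> a + grad a \<bullet> u \<le> phi u" if "u \<in> edom Phi" for u
    using phi_gradient_ineq[OF a that] by (simp add: inner_diff_right)
  show "phi b = phi a - grad a \<bullet> a + grad a \<bullet> b"
    using breg_nonneg[OF a b] \<open>breg b a \<le> 0\<close> unfolding breg_def by (simp add: inner_diff_right)
  show "a \<in> edom Phi"
    using a int_dom_subset by blast
qed (use b in simp_all)

lemma breg_lsc:
  assumes a: "a \<longlonglongrightarrow> a0" "a0 \<in> int_dom" and b: "b \<longlonglongrightarrow> b0" "\<And>n. b n \<in> edom Phi"
    and c: "c \<longlonglongrightarrow> c0" "\<And>n. breg (b n) (a n) \<le> c n"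
  shows "b0 \<in> edom Phi" and "breg b0 a0 \<le> c0"
proof -
  have lim: "(\<lambda>n. c n + phi (a n) + grad (a n) \<bullet> (b n - a n)) \<longlonglongrightarrow> c0 + phi a0 + grad a0 \<bullet> (b0 - a0)"
    by (intro tendsto_intros c(1) b(1) a(1) isCont_tendsto_compose[OF isCont_phi[OF a(2)] a(1)]
        isCont_tendsto_compose[OF isCont_grad[OF a(2)] a(1)])
  have le: "phi (b n) \<le> c n + phi (a n) + grad (a n) \<bullet> (b n - a n)" for n
    using c(2)[of n] unfolding breg_def by simp
  show "b0 \<in> edom Phi"
    by (rule phi_lsc_bound(1)[OF b(1) lim b(2) le])
  show "breg b0 a0 \<le> c0"
    using phi_lsc_bound(2)[OF b(1) lim b(2) le] unfolding breg_def by simp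
qed

lemma breg_sphere_point:
  assumes a: "a \<in> int_dom" and b: "b \<in> edom Phi" and eps: "0 < \<epsilon>" "\<epsilon> \<le> norm (b - a)"
  obtains q where "q \<in> edom Phi" "norm (q - a) = \<epsilon>" "breg q a \<le> breg b a"
proof -
  define t where "t = \<epsilon> / norm (b - a)"
  have t: "0 \<le> t" "t \<le> 1"
    using eps unfolding t_def by (auto simp: divide_le_eq)
  define q where "q = (1 - t) *\<^sub>R a + t *\<^sub>R b"
  have "q \<in> edom Phi"
    unfolding q_def using phi_convex_comb(1)[OF _ b t] a int_dom_subset by blast
  moreover have "norm (q - a) = \<epsilon>"
  proof -
    have "q - a = t *\<^sub>R (b - a)"
      unfolding q_def by (simp add: algebra_simps)
    then show ?thesis
      using eps unfolding t_def by auto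
  qed
  moreover have "breg q a \<le> breg b a"
  proof -
    have "breg q a \<le> t * breg b a"
      unfolding q_def by (rule breg_convex_comb[OF a b t])
    also have "\<dots> \<le> breg b a"
      using t breg_nonneg[OF a b] by (simp add: mult_left_le_one_le)
    finally show ?thesis .
  qed
  ultimately show ?thesis
    by (rule that)
qed

lemma breg_uniformly_pos:
  assumes K: "compact K" "K \<subseteq> int_dom" and eps: "\<epsilon> > 0"
  obtains \<eta> where "\<eta> > 0" "\<And>a b. a \<in> K \<Longrightarrow> b \<in> edom Phi \<Longrightarrow> \<epsilon> \<le> norm (b - a) \<Longrightarrow> \<eta> \<le> breg b a"
proof (rule ccontr)
  assume "\<not> thesis"
  then have bad: "\<exists>a\<in>K. \<exists>b\<in>edom Phi. \<epsilon> \<le> norm (b - a) \<and> breg b a < inverse (real (Suc n))" for n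
    using that[of "inverse (real (Suc n))"]
    by (meson not_le of_nat_0_less_iff positive_imp_inverse_positive zero_less_Suc)
  have "\<exists>a\<in>K. \<exists>q\<in>edom Phi. norm (q - a) = \<epsilon> \<and> breg q a < inverse (real (Suc n))" for n
  proof -
    obtain a b where ab: "a \<in> K" "b \<in> edom Phi" "\<epsilon> \<le> norm (b - a)" "breg b a < inverse (real (Suc n))"
      using bad[of n] by blast
    have "a \<in> int_dom"
      using ab(1) K(2) by blast
    obtain q where q: "q \<in> edom Phi" "norm (q - a) = \<epsilon>" "breg q a \<le> breg b a"
      using breg_sphere_point[OF \<open>a \<in> int_dom\<close> ab(2) eps ab(3)] .
    have "breg q a < inverse (real (Suc n))"
      using q(3) ab(4) by linarith
    then show ?thesis
      using ab(1) q(1,2) by blast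
  qed
  then obtain a q where aq: "\<And>n. a n \<in> K" "\<And>n. q n \<in> edom Phi" "\<And>n. norm (q n - a n) = \<epsilon>"
    "\<And>n. breg (q n) (a n) \<le> inverse (real (Suc n))"
    by (metis less_imp_le)
  have "\<forall>n. (a n, q n - a n) \<in> K \<times> sphere 0 \<epsilon>"
    using aq(1,3) by simp
  from seq_compactE[OF compact_imp_seq_compact[OF compact_Times[OF K(1) compact_sphere]] this]
  obtain l s where l: "l \<in> K \<times> sphere 0 \<epsilon>"
    and s: "strict_mono s" "((\<lambda>n. (a n, q n - a n)) \<circ> s) \<longlonglongrightarrow> l"
    by blast
  have a_lim: "(\<lambda>n. a (s n)) \<longlonglongrightarrow> fst l" and d_lim: "(\<lambda>n. q (s n) - a (s n)) \<longlonglongrightarrow> snd l"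
    using tendsto_fst[OF s(2)] tendsto_snd[OF s(2)] by (simp_all add: o_def)
  have "(\<lambda>n. q (s n)) \<longlonglongrightarrow> fst l + snd l"
    using tendsto_add[OF a_lim d_lim] by simp
  moreover have "(\<lambda>n. inverse (real (Suc (s n)))) \<longlonglongrightarrow> 0"
    using LIMSEQ_subseq_LIMSEQ[OF LIMSEQ_inverse_real_of_nat s(1)] by (simp add: o_def)
  moreover have l_int: "fst l \<in> int_dom"
    using l K(2) by auto
  ultimately have "fst l + snd l \<in> edom Phi" "breg (fst l + snd l) (fst l) \<le> 0"
    using breg_lsc[OF a_lim _ _ aq(2)] aq(4) by blast+
  then have "fst l + snd l = fst l"
    using breg_nonpos_imp_eq l_int by blast
  then show False
    using l eps by auto
qed

lemma breg_tendsto_0_imp_tendsto_diff: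
  assumes K: "compact K" "K \<subseteq> int_dom" and a: "\<And>n. a n \<in> K" and b: "\<And>n. b n \<in> edom Phi"
    and lim: "(\<lambda>n. breg (b n) (a n)) \<longlonglongrightarrow> 0"
  shows "(\<lambda>n. b n - a n) \<longlonglongrightarrow> 0"
proof (rule tendstoI)
  fix \<epsilon> :: real
  assume "\<epsilon> > 0"
  then obtain \<eta> where \<eta>: "\<eta> > 0" "\<And>a b. a \<in> K \<Longrightarrow> b \<in> edom Phi \<Longrightarrow> \<epsilon> \<le> norm (b - a) \<Longrightarrow> \<eta> \<le> breg b a"
    using breg_uniformly_pos[OF K] by blast
  have "\<forall>\<^sub>F n in sequentially. dist (breg (b n) (a n)) 0 < \<eta>"
    using tendstoD[OF lim \<eta>(1)] .
  then show "\<forall>\<^sub>F n in sequentially. dist (b n - a n) 0 < \<epsilon>"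
  proof eventually_elim
    fix n
    assume "dist (breg (b n) (a n)) 0 < \<eta>"
    then have "\<not> \<epsilon> \<le> norm (b n - a n)"
      using \<eta>(2)[OF a b, of n] by force
    then show "dist (b n - a n) 0 < \<epsilon>"
      by simp
  qed
qed

lemma closure_subset_int_dom:
  assumes S: "S \<subseteq> int_dom" and x: "x \<in> int_dom" and bdd: "\<And>y. y \<in> S \<Longrightarrow> breg x y \<le> M"
  shows "closure S \<subseteq> int_dom"
proof
  fix y
  assume y: "y \<in> closure S"
  obtain r where r: "r > 0" "\<And>y. y \<in> int_dom \<Longrightarrow> r * norm (grad y) - 1 \<le> breg x y"
    using norm_grad_le_breg[OF x] by blast
  obtain s where s: "\<And>n. s n \<in> S" "s \<longlonglongrightarrow> y"
    using y unfolding closure_sequential by blast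
  have bounded: "norm (grad (s n)) \<le> (M + 1) / r" for n
    using r(2)[of "s n"] bdd[OF s(1)[of n]] S s(1)[of n] r(1) by (auto simp: field_simps)
  show "y \<in> int_dom"
  proof (rule ccontr)
    assume "y \<notin> int_dom"
    moreover have "y \<in> closure (edom Phi)"
      using y S int_dom_subset closure_mono by blast
    ultimately have "y \<in> frontier (edom Phi)"
      unfolding frontier_def by blast
    then have "filterlim (\<lambda>n. norm (grad (s n))) at_top sequentially"
      using Phi_smooth s S unfolding essentially_smooth_def by blast
    then have "\<forall>\<^sub>F n in sequentially. (M + 1) / r < norm (grad (s n))"
      by (simp add: filterlim_at_top_dense)
    then show False
      using bounded by (auto simp: not_less[symmetric] dest: eventually_happens')
  qed
qed

section \<open>The Fenchel conjugate\<close>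

abbreviation Phi_conj :: "'a \<Rightarrow> ereal" where
  "Phi_conj \<equiv> conj_fun Phi"

(* equivalently, v is a subgradient of Phi at x *)
definition tilt_min :: "'a \<Rightarrow> 'a \<Rightarrow> bool" where
  "tilt_min v x \<longleftrightarrow> x \<in> edom Phi \<and> (\<forall>u\<in>edom Phi. phi x - v \<bullet> x \<le> phi u - v \<bullet> u)"

lemma fenchel_young: "u \<in> edom Phi \<Longrightarrow> ereal (u \<bullet> v - phi u) \<le> Phi_conj v"
proof -
  assume u: "u \<in> edom Phi"
  have "ereal (u \<bullet> v) - Phi u \<le> Phi_conj v"
    unfolding conj_fun_def by (rule SUP_upper) simp
  then show ?thesis
    using Phi_eq_phi[OF u] by simp
qed

lemma fenchel_young_real:
  "u \<in> edom Phi \<Longrightarrow> v \<in> edom Phi_conj \<Longrightarrow> u \<bullet> v - phi u \<le> real_of_ereal (Phi_conj v)"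
  using fenchel_young[of u v] unfolding edom_def by (cases "Phi_conj v") auto

lemma conj_fun_eq_tilt_min:
  assumes x: "tilt_min v x"
  shows "Phi_conj v = ereal (x \<bullet> v - phi x)"
proof (rule antisym)
  show "Phi_conj v \<le> ereal (x \<bullet> v - phi x)"
    unfolding conj_fun_def
  proof (rule SUP_least)
    fix u
    show "ereal (u \<bullet> v) - Phi u \<le> ereal (x \<bullet> v - phi x)"
    proof (cases "u \<in> edom Phi")
      case True
      then have "phi x - v \<bullet> x \<le> phi u - v \<bullet> u"
        using x unfolding tilt_min_def by blast
      then show ?thesis
        by (simp add: Phi_eq_phi[OF True] inner_commute)
    qed (simp add: Phi_notin_edom)
  qed
  show "ereal (x \<bullet> v - phi x) \<le> Phi_conj v"
    using fenchel_young x unfolding tilt_min_def by blast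
qed

lemma tilt_min_unique:
  assumes x: "tilt_min v x" and x': "tilt_min v x'"
  shows "x = x'"
proof (rule affine_minorant_contact_unique[where c = "phi x - v \<bullet> x" and g = v])
  show "phi x - v \<bullet> x + v \<bullet> u \<le> phi u" if "u \<in> edom Phi" for u
    using x that unfolding tilt_min_def by force
  show "phi x' = phi x - v \<bullet> x + v \<bullet> x'"
    using x x' unfolding tilt_min_def by force
qed (use x x' in \<open>auto simp: tilt_min_def\<close>)

lemma conj_remainder_le:
  assumes a: "tilt_min v a" and b: "tilt_min y b"
  shows "\<bar>real_of_ereal (Phi_conj v) - real_of_ereal (Phi_conj y) - b \<bullet> (v - y)\<bar>
    \<le> norm (a - b) * norm (v - y)"
proof -
  have min_v: "phi a - v \<bullet> a \<le> phi b - v \<bullet> b"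
    using a b unfolding tilt_min_def by blast
  have min_y: "phi b - y \<bullet> b \<le> phi a - y \<bullet> a"
    using a b unfolding tilt_min_def by blast
  have "real_of_ereal (Phi_conj v) - real_of_ereal (Phi_conj y) - b \<bullet> (v - y)
      = a \<bullet> v - b \<bullet> v + phi b - phi a"
    using conj_fun_eq_tilt_min[OF a] conj_fun_eq_tilt_min[OF b] by (simp add: inner_diff_right)
  moreover have "(a - b) \<bullet> (v - y) = a \<bullet> v - b \<bullet> v - (a \<bullet> y - b \<bullet> y)"
    by (simp add: inner_diff_left inner_diff_right)
  moreover have "(a - b) \<bullet> (v - y) \<le> norm (a - b) * norm (v - y)"
    by (rule norm_cauchy_schwarz)
  ultimately show ?thesis
    using min_v min_y inner_commute[of v a] inner_commute[of v b] inner_commute[of y a] inner_commute[of y b]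
    by linarith
qed

lemma linear_growth_if_int_dom_conj:
  assumes y: "y \<in> interior (edom Phi_conj)"
  obtains e C where "e > 0" "\<And>u. u \<in> edom Phi \<Longrightarrow> e * norm u - C \<le> phi u - y \<bullet> u"
proof -
  obtain e0 where e0: "e0 > 0" "ball y e0 \<subseteq> edom Phi_conj"
    using y open_interior open_contains_ball interior_subset by (metis subset_trans)
  define e where "e = e0 / 2"
  have e: "e > 0" "e < e0"
    using e0 unfolding e_def by auto
  define cp where "cp b = real_of_ereal (Phi_conj (y + e *\<^sub>R b))" for b
  define cm where "cm b = real_of_ereal (Phi_conj (y - e *\<^sub>R b))" for b
  define bound where "bound b = \<bar>cp b\<bar> + \<bar>cm b\<bar>" for b
  \<comment> \<open>Fenchel-Young at the points y +- e b, b in Basis, bounds every coordinate of u\<close>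
  have coord: "e * \<bar>u \<bullet> b\<bar> \<le> (phi u - y \<bullet> u) + bound b" if u: "u \<in> edom Phi" and b: "b \<in> Basis" for u b
  proof -
    have "y + e *\<^sub>R b \<in> ball y e0" "y - e *\<^sub>R b \<in> ball y e0"
      using e b by (auto simp: dist_norm)
    then have "y + e *\<^sub>R b \<in> edom Phi_conj" "y - e *\<^sub>R b \<in> edom Phi_conj"
      using e0(2) by blast+
    from this[THEN fenchel_young_real[OF u]]
    have "y \<bullet> u + e * (u \<bullet> b) - phi u \<le> cp b" "y \<bullet> u - e * (u \<bullet> b) - phi u \<le> cm b"
      unfolding cp_def cm_def by (simp_all add: inner_add_right inner_diff_right inner_commute)
    then show ?thesis
      unfolding bound_def using e by (auto simp: abs_if abs_mult)
  qed
  have "(e / DIM('a)) * norm u - (\<Sum>b\<in>Basis. bound b) / DIM('a) \<le> phi u - y \<bullet> u"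
    if u: "u \<in> edom Phi" for u
  proof -
    have "e * norm u \<le> e * (\<Sum>b\<in>Basis. \<bar>u \<bullet> b\<bar>)"
      using e norm_le_l1[of u] by (simp add: mult_left_mono)
    also have "\<dots> \<le> (\<Sum>b\<in>Basis. (phi u - y \<bullet> u) + bound b)"
      unfolding sum_distrib_left by (rule sum_mono) (rule coord[OF u])
    also have "\<dots> = DIM('a) * (phi u - y \<bullet> u) + (\<Sum>b\<in>Basis. bound b)"
      by (simp add: sum.distrib)
    finally show ?thesis
      by (simp add: field_simps)
  qed
  moreover have "e / DIM('a) > 0"
    using e by simp
  ultimately show ?thesis
    using that by blast
qed

lemma linear_growth_near_int_dom_conj:
  assumes y: "y \<in> interior (edom Phi_conj)"
  obtains \<delta> C where "\<delta> > 0"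
    "\<And>v u. v \<in> ball y \<delta> \<Longrightarrow> u \<in> edom Phi \<Longrightarrow> \<delta> * norm u - C \<le> phi u - v \<bullet> u"
proof -
  obtain e C where e: "e > 0" and growth: "\<And>u. u \<in> edom Phi \<Longrightarrow> e * norm u - C \<le> phi u - y \<bullet> u"
    using linear_growth_if_int_dom_conj[OF y] by blast
  have "e / 2 > 0"
    using e by simp
  moreover have "(e / 2) * norm u - C \<le> phi u - v \<bullet> u" if v: "v \<in> ball y (e / 2)" and u: "u \<in> edom Phi" for u v
  proof -
    have "(v - y) \<bullet> u \<le> norm (v - y) * norm u"
      by (rule norm_cauchy_schwarz)
    also have "\<dots> \<le> (e / 2) * norm u"
      using v by (intro mult_right_mono) (auto simp: dist_norm norm_minus_commute)
    finally have "v \<bullet> u - y \<bullet> u \<le> e * norm u / 2"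
      by (simp add: inner_diff_left)
    then show ?thesis
      using growth[OF u] by simp
  qed
  ultimately show ?thesis
    by (rule that)
qed

lemma tilt_min_limit:
  assumes x: "xs \<longlonglongrightarrow> x" and v: "vs \<longlonglongrightarrow> v" and eps: "eps \<longlonglongrightarrow> 0"
    and dom: "\<And>n. xs n \<in> edom Phi"
    and approx: "\<And>n u. u \<in> edom Phi \<Longrightarrow> phi (xs n) - vs n \<bullet> xs n \<le> phi u - vs n \<bullet> u + eps n"
  shows "tilt_min v x"
proof -
  have lim: "x \<in> edom Phi \<and> phi x \<le> phi u - v \<bullet> u + 0 + v \<bullet> x" if u: "u \<in> edom Phi" for u
  proof -
    have "(\<lambda>n. phi u - vs n \<bullet> u + eps n + vs n \<bullet> xs n) \<longlonglongrightarrow> phi u - v \<bullet> u + 0 + v \<bullet> x"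
      by (intro tendsto_intros x v eps)
    moreover have "phi (xs n) \<le> phi u - vs n \<bullet> u + eps n + vs n \<bullet> xs n" for n
      using approx[OF u, of n] by simp
    ultimately show ?thesis
      using phi_lsc_bound[OF x _ dom] by blast
  qed
  then show ?thesis
    unfolding tilt_min_def using edom_nonempty by fastforce
qed

lemma tilt_min_exists:
  assumes e: "e > 0" and growth: "\<And>u. u \<in> edom Phi \<Longrightarrow> e * norm u - C \<le> phi u - v \<bullet> u"
  obtains x where "tilt_min v x"
proof -
  define m where "m = (INF u\<in>edom Phi. phi u - v \<bullet> u)"
  have bdd: "bdd_below ((\<lambda>u. phi u - v \<bullet> u) ` edom Phi)"
  proof (rule bdd_belowI2)
    fix u
    assume "u \<in> edom Phi"
    moreover have "0 \<le> e * norm u"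
      using e by simp
    ultimately show "- C \<le> phi u - v \<bullet> u"
      using growth by force
  qed
  have "\<exists>u\<in>edom Phi. phi u - v \<bullet> u < m + inverse (real (Suc n))" for n
    using cINF_less_iff[OF edom_nonempty bdd, of "m + inverse (real (Suc n))"]
    unfolding m_def[symmetric] by simp
  then obtain us where us: "\<And>n. us n \<in> edom Phi" "\<And>n. phi (us n) - v \<bullet> us n < m + inverse (real (Suc n))"
    by metis
  have "norm (us n) \<le> (m + 1 + C) / e" for n
  proof -
    have "e * norm (us n) - C < m + inverse (real (Suc n))"
      using growth[OF us(1)] us(2) by (rule le_less_trans)
    moreover have "inverse (real (Suc n)) \<le> 1"
      by (simp add: field_simps)
    ultimately have "e * norm (us n) \<le> m + 1 + C"
      by linarith
    then show ?thesis
      using e by (simp add: field_simps)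
  qed
  then obtain x q where q: "strict_mono q" "(us \<circ> q) \<longlonglongrightarrow> x"
    using bounded_imp_convergent_subsequence[of us] unfolding bounded_iff by blast
  have "tilt_min v x"
  proof (rule tilt_min_limit[OF _ tendsto_const])
    show "(\<lambda>n. us (q n)) \<longlonglongrightarrow> x"
      using q(2) by (simp add: o_def)
    show "(\<lambda>n. inverse (real (Suc (q n)))) \<longlonglongrightarrow> 0"
      using LIMSEQ_subseq_LIMSEQ[OF LIMSEQ_inverse_real_of_nat q(1)] by (simp add: o_def)
    show "phi (us (q n)) - v \<bullet> us (q n) \<le> phi u - v \<bullet> u + inverse (real (Suc (q n)))"
      if "u \<in> edom Phi" for n u
      using us(2)[of "q n"] cINF_lower[OF bdd that] unfolding m_def[symmetric] by linarith
  qed (rule us(1))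
  then show ?thesis
    by (rule that)
qed

lemma tilt_min_tendsto:
  assumes e: "e > 0" and growth: "\<And>n u. u \<in> edom Phi \<Longrightarrow> e * norm u - C \<le> phi u - v n \<bullet> u"
    and v: "v \<longlonglongrightarrow> y" and x: "\<And>n. tilt_min (v n) (x n)" and x0: "tilt_min y x0"
  shows "x \<longlonglongrightarrow> x0"
proof -
  obtain B where B: "\<And>n. norm (v n) \<le> B"
    using convergent_imp_Bseq[OF convergentI[OF v]] unfolding Bseq_def by blast
  have x0_dom: "x0 \<in> edom Phi"
    using x0 unfolding tilt_min_def by blast
  have "norm (x n) \<le> (C + \<bar>phi x0\<bar> + B * norm x0) / e" for n
  proof -
    have "e * norm (x n) - C \<le> phi (x n) - v n \<bullet> x n"
      using growth x unfolding tilt_min_def by blast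
    also have "\<dots> \<le> phi x0 - v n \<bullet> x0"
      using x x0_dom unfolding tilt_min_def by blast
    also have "\<dots> \<le> \<bar>phi x0\<bar> + norm (v n) * norm x0"
      using norm_cauchy_schwarz[of "- v n" x0] by simp
    also have "\<dots> \<le> \<bar>phi x0\<bar> + B * norm x0"
      using B[of n] by (simp add: mult_right_mono)
    finally show ?thesis
      using e by (simp add: field_simps)
  qed
  then have "\<forall>\<^sub>F n in sequentially. x n \<in> cball 0 ((C + \<bar>phi x0\<bar> + B * norm x0) / e)"
    by simp
  then show ?thesis
  proof (rule tendsto_if_unique_cluster_point[OF compact_cball])
    fix q l
    assume q: "strict_mono q" "(x \<circ> q) \<longlonglongrightarrow> l"
    have "tilt_min y l"
    proof (rule tilt_min_limit[OF _ _ tendsto_const])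
      show "(\<lambda>n. x (q n)) \<longlonglongrightarrow> l"
        using q(2) by (simp add: o_def)
      show "(\<lambda>n. v (q n)) \<longlonglongrightarrow> y"
        using LIMSEQ_subseq_LIMSEQ[OF v q(1)] by (simp add: o_def)
    qed (use x in \<open>auto simp: tilt_min_def\<close>)
    then show "l = x0"
      using x0 by (rule tilt_min_unique)
  qed
qed

lemma conj_has_derivative:
  assumes y: "y \<in> interior (edom Phi_conj)"
  obtains x where "tilt_min y x" "((\<lambda>v. real_of_ereal (Phi_conj v)) has_derivative (\<lambda>h. x \<bullet> h)) (at y)"
proof -
  obtain \<delta> C where \<delta>: "\<delta> > 0"
    and growth: "\<And>v u. v \<in> ball y \<delta> \<Longrightarrow> u \<in> edom Phi \<Longrightarrow> \<delta> * norm u - C \<le> phi u - v \<bullet> u"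
    using linear_growth_near_int_dom_conj[OF y] by blast
  define xm where "xm v = (SOME x. tilt_min v x)" for v
  have xm: "tilt_min v (xm v)" if v: "v \<in> ball y \<delta>" for v
  proof -
    obtain x where "tilt_min v x"
      using tilt_min_exists[OF \<delta> growth[OF v]] .
    then show ?thesis
      unfolding xm_def by (rule someI)
  qed
  have y_ball: "y \<in> ball y \<delta>"
    using \<delta> by simp
  have "(xm \<longlongrightarrow> xm y) (at y within ball y \<delta>)"
  proof (rule tendsto_at_iff_sequentially[THEN iffD2], intro allI impI)
    fix vs
    assume vs: "\<forall>n. vs n \<in> ball y \<delta> - {y}" "vs \<longlonglongrightarrow> y"
    show "(xm \<circ> vs) \<longlonglongrightarrow> xm y"
      using tilt_min_tendsto[OF \<delta> growth vs(2) xm xm[OF y_ball]] vs(1) by (simp add: o_def)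
  qed
  then have xm_lim: "(xm \<longlongrightarrow> xm y) (at y)"
    using at_within_open[OF y_ball open_ball] by simp
  have "\<forall>\<^sub>F v in at y. \<bar>real_of_ereal (Phi_conj v) - real_of_ereal (Phi_conj y) - xm y \<bullet> (v - y)\<bar>
      \<le> norm (xm v - xm y) * norm (v - y)"
    using eventually_at_in_open'[OF open_ball y_ball]
    by eventually_elim (rule conj_remainder_le[OF xm xm[OF y_ball]])
  then have "((\<lambda>v. real_of_ereal (Phi_conj v)) has_derivative (\<lambda>h. xm y \<bullet> h)) (at y)"
    by (rule has_derivative_inner_if_remainder) (rule tendsto_norm_zero[OF LIM_zero[OF xm_lim]])
  with xm[OF y_ball] show ?thesis
    by (rule that)
qed

lemma grad_egrad_conj:
  assumes y: "y \<in> interior (edom Phi_conj)" and int: "egrad Phi_conj y \<in> int_dom"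
  shows "grad (egrad Phi_conj y) = y"
proof -
  obtain x where x: "tilt_min y x"
    and deriv: "((\<lambda>v. real_of_ereal (Phi_conj v)) has_derivative (\<lambda>h. x \<bullet> h)) (at y)"
    using conj_has_derivative[OF y] by blast
  have "egrad Phi_conj y = x"
    by (rule egrad_eqI[OF deriv])
  moreover have "grad x = y"
  proof (rule grad_eqI)
    show "x \<in> int_dom"
      using int \<open>egrad Phi_conj y = x\<close> by simp
    show "phi x + y \<bullet> (u - x) \<le> phi u" if "u \<in> edom Phi" for u
      using x that unfolding tilt_min_def by (force simp: inner_diff_right)
  qed
  ultimately show ?thesis
    by simp
qed

end

section \<open>The inexact Bregman proximal point algorithm\<close>

locale inexact_bregman_ppa = legendre_function Phi
  for Phi :: "'a::euclidean_space \<Rightarrow> ereal" +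
  fixes T :: "'a \<Rightarrow> 'a set"
    and z p w :: "nat \<Rightarrow> 'a"
    and sigma_seq rho_seq :: "nat \<Rightarrow> real"
    and sigma rho :: real
  assumes maxmono: "maximal_monotone T"
    and z0: "z 0 \<in> interior (edom Phi)"
    and sigma_pos: "0 < sigma"
    and sigma_ge: "\<And>k. sigma \<le> sigma_seq k"
    and rho_lt: "rho < 1"
    and rho_bounds: "\<And>k. 0 \<le> rho_seq k \<and> rho_seq k \<le> rho"
    and p_dom: "\<And>k. p k \<in> edom Phi"
    and w_in: "\<And>k. w k \<in> T (p k)"
    and step_dom: "\<And>k. egrad Phi (z k) - sigma_seq k *\<^sub>R w k \<in> interior (edom (conj_fun Phi))"
    and step: "\<And>k. z (Suc k) = egrad (conj_fun Phi) (egrad Phi (z k) - sigma_seq k *\<^sub>R w k)"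
    and z_int: "\<And>k. z (Suc k) \<in> interior (edom Phi)"
    and inexact: "\<And>k. bregman Phi (p k) (z (Suc k)) \<le> ereal (rho_seq k) * bregman Phi (p k) (z k)"
begin

lemma z_in_int_dom: "z k \<in> int_dom"
  using z0 z_int by (cases k) auto

lemma grad_step: "grad (z k) - grad (z (Suc k)) = sigma_seq k *\<^sub>R w k"
proof -
  have "grad (z (Suc k)) = grad (z k) - sigma_seq k *\<^sub>R w k"
    using grad_egrad_conj[OF step_dom, of k] z_int[of k] unfolding step[of k] by simp
  then show ?thesis
    by simp
qed

lemma breg_inexact: "breg (p k) (z (Suc k)) \<le> rho * breg (p k) (z k)"
proof -
  have "breg (p k) (z (Suc k)) \<le> rho_seq k * breg (p k) (z k)"
    using inexact[of k] by (simp add: bregman_eq_breg p_dom z_in_int_dom)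
  also have "\<dots> \<le> rho * breg (p k) (z k)"
    using rho_bounds[of k] breg_nonneg[OF z_in_int_dom p_dom] by (intro mult_right_mono) auto
  finally show ?thesis .
qed

lemma breg_fejer:
  assumes u: "u \<in> zer T"
  shows "breg u (z (Suc k)) \<le> breg u (z k) - (1 - rho) * breg (p k) (z k)"
proof -
  have "0 \<le> (w k - 0) \<bullet> (p k - u)"
    using maximal_monotoneD[OF maxmono w_in] u unfolding zer_def by blast
  then have "sigma_seq k * (w k \<bullet> (u - p k)) \<le> 0"
    using sigma_pos sigma_ge[of k] by (simp add: inner_diff_right mult_nonneg_nonpos)
  moreover have "breg u (z (Suc k)) - breg u (z k) - (breg (p k) (z (Suc k)) - breg (p k) (z k))
      = sigma_seq k * (w k \<bullet> (u - p k))"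
    using breg_three_point[of u "z (Suc k)" "z k" "p k"] grad_step[of k] by simp
  ultimately show ?thesis
    using breg_inexact[of k] by (simp add: algebra_simps)
qed

lemma decseq_breg_zero:
  assumes u: "u \<in> zer T"
  shows "decseq (\<lambda>k. breg u (z k))"
proof (rule decseq_SucI)
  fix k
  have "0 \<le> (1 - rho) * breg (p k) (z k)"
    using rho_lt breg_nonneg[OF z_in_int_dom p_dom] by simp
  then show "breg u (z (Suc k)) \<le> breg u (z k)"
    using breg_fejer[OF u, of k] by linarith
qed

lemma breg_p_z_tendsto_0:
  assumes u: "u \<in> zer T" "u \<in> edom Phi"
  shows "(\<lambda>k. breg (p k) (z k)) \<longlonglongrightarrow> 0"
proof -
  obtain L where L: "(\<lambda>k. breg u (z k)) \<longlonglongrightarrow> L"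
    using decseq_convergent[OF decseq_breg_zero[OF u(1)]] breg_nonneg[OF z_in_int_dom u(2)] by blast
  have "(\<lambda>k. (breg u (z k) - breg u (z (Suc k))) / (1 - rho)) \<longlonglongrightarrow> (L - L) / (1 - rho)"
    by (intro tendsto_intros L LIMSEQ_Suc[OF L]) (use rho_lt in simp)
  then have bound_lim: "(\<lambda>k. (breg u (z k) - breg u (z (Suc k))) / (1 - rho)) \<longlonglongrightarrow> 0"
    by simp
  show ?thesis
  proof (rule tendsto_sandwich[OF _ _ tendsto_const bound_lim])
    show "\<forall>\<^sub>F k in sequentially. 0 \<le> breg (p k) (z k)"
      using breg_nonneg[OF z_in_int_dom p_dom] by simp
    show "\<forall>\<^sub>F k in sequentially. breg (p k) (z k) \<le> (breg u (z k) - breg u (z (Suc k))) / (1 - rho)"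
      using breg_fejer[OF u(1)] rho_lt by (simp add: field_simps mult.commute)
  qed
qed

lemma iterates_closure_compact:
  assumes u: "u \<in> zer T" "u \<in> int_dom" and coercive: "coercive (bregman Phi u)"
  shows "compact (closure (range z))" and "closure (range z) \<subseteq> int_dom"
proof -
  have u_dom: "u \<in> edom Phi"
    using u(2) int_dom_subset by blast
  have le0: "breg u (z k) \<le> breg u (z 0)" for k
    using decseqD[OF decseq_breg_zero[OF u(1)]] by simp
  obtain R where R: "\<And>x. R \<le> norm x \<Longrightarrow> ereal (breg u (z 0) + 1) \<le> bregman Phi u x"
    using coercive unfolding coercive_def by blast
  have "norm (z k) \<le> R" for k
  proof (rule ccontr)
    assume "\<not> norm (z k) \<le> R"
    then have "breg u (z 0) + 1 \<le> breg u (z k)"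
      using R[of "z k"] by (simp add: bregman_eq_breg[OF u_dom z_in_int_dom])
    then show False
      using le0[of k] by simp
  qed
  then have "bounded (range z)"
    unfolding bounded_iff by blast
  then show "compact (closure (range z))"
    by (simp add: compact_closure)
  show "closure (range z) \<subseteq> int_dom"
    by (rule closure_subset_int_dom[OF _ u(2)]) (use z_in_int_dom le0 in auto)
qed

lemma iterates_differences_tendsto_0:
  assumes K: "compact K" "K \<subseteq> int_dom" "range z \<subseteq> K" and u: "u \<in> zer T" "u \<in> edom Phi"
  shows "(\<lambda>k. p k - z k) \<longlonglongrightarrow> 0" and "(\<lambda>k. z (Suc k) - z k) \<longlonglongrightarrow> 0"
proof -
  have zK: "z k \<in> K" for k
    using K(3) by blast
  have breg_lim: "(\<lambda>k. breg (p k) (z k)) \<longlonglongrightarrow> 0"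
    by (rule breg_p_z_tendsto_0[OF u])
  then show pz: "(\<lambda>k. p k - z k) \<longlonglongrightarrow> 0"
    by (rule breg_tendsto_0_imp_tendsto_diff[OF K(1,2) zK p_dom, rotated])
  have "(\<lambda>k. breg (p k) (z (Suc k))) \<longlonglongrightarrow> 0"
  proof (rule tendsto_sandwich[OF _ _ tendsto_const])
    show "\<forall>\<^sub>F k in sequentially. 0 \<le> breg (p k) (z (Suc k))"
      using breg_nonneg[OF z_in_int_dom p_dom] by simp
    show "\<forall>\<^sub>F k in sequentially. breg (p k) (z (Suc k)) \<le> rho * breg (p k) (z k)"
      using breg_inexact by simp
    show "(\<lambda>k. rho * breg (p k) (z k)) \<longlonglongrightarrow> 0"
      using tendsto_mult_right_zero[OF breg_lim] by simp
  qed
  then have "(\<lambda>k. p k - z (Suc k)) \<longlonglongrightarrow> 0"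
    by (rule breg_tendsto_0_imp_tendsto_diff[OF K(1,2) zK p_dom, rotated])
  then have "(\<lambda>k. (p k - z k) - (p k - z (Suc k))) \<longlonglongrightarrow> 0 - 0"
    by (rule tendsto_diff[OF pz])
  then show "(\<lambda>k. z (Suc k) - z k) \<longlonglongrightarrow> 0"
    by simp
qed

lemma w_tendsto_0:
  assumes K: "compact K" "K \<subseteq> int_dom" "range z \<subseteq> K" and zz: "(\<lambda>k. z (Suc k) - z k) \<longlonglongrightarrow> 0"
  shows "w \<longlonglongrightarrow> 0"
proof -
  have "(\<lambda>k. dist (z (Suc k)) (z k)) \<longlonglongrightarrow> 0"
    using zz by (simp add: dist_norm tendsto_norm_zero)
  moreover have "uniformly_continuous_on K grad"
    using compact_uniformly_continuous[OF continuous_on_subset[OF continuous_on_grad K(2)] K(1)] .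
  ultimately have grad_lim: "(\<lambda>k. dist (grad (z (Suc k))) (grad (z k))) \<longlonglongrightarrow> 0"
    unfolding uniformly_continuous_on_sequentially using K(3) by (simp add: image_subset_iff)
  have "norm (w k) \<le> dist (grad (z (Suc k))) (grad (z k)) / sigma" for k
  proof -
    have "sigma * norm (w k) \<le> sigma_seq k * norm (w k)"
      using sigma_ge[of k] by (simp add: mult_right_mono)
    also have "\<dots> = norm (sigma_seq k *\<^sub>R w k)"
      using sigma_pos sigma_ge[of k] by simp
    also have "\<dots> = dist (grad (z (Suc k))) (grad (z k))"
      unfolding grad_step[symmetric] by (simp add: dist_norm norm_minus_commute)
    finally show ?thesis
      using sigma_pos by (simp add: field_simps)
  qed
  then have "\<forall>\<^sub>F k in sequentially. norm (w k) \<le> dist (grad (z (Suc k))) (grad (z k)) / sigma"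
    by simp
  then show "w \<longlonglongrightarrow> 0"
    by (rule Lim_null_comparison) (rule tendsto_divide_zero[OF grad_lim])
qed

lemma cluster_point_in_zer:
  assumes r: "strict_mono r" "(z \<circ> r) \<longlonglongrightarrow> x"
    and pz: "(\<lambda>k. p k - z k) \<longlonglongrightarrow> 0" and w: "w \<longlonglongrightarrow> 0"
  shows "x \<in> zer T"
proof -
  have p_lim: "(\<lambda>n. p (r n)) \<longlonglongrightarrow> x"
    using tendsto_add[OF LIMSEQ_subseq_LIMSEQ[OF pz r(1)] r(2)] by (simp add: o_def)
  have w_lim: "(\<lambda>n. w (r n)) \<longlonglongrightarrow> 0"
    using LIMSEQ_subseq_LIMSEQ[OF w r(1)] by (simp add: o_def)
  have "0 \<in> T x"
    using maximal_monotone_limit[OF maxmono _ p_lim w_lim] w_in by blast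
  then show ?thesis
    unfolding zer_def by simp
qed

lemma tendsto_zero_cluster_point:
  assumes K: "compact K" "K \<subseteq> int_dom" "range z \<subseteq> K" and x: "x \<in> zer T" "x \<in> int_dom"
    and r: "strict_mono r" "(z \<circ> r) \<longlonglongrightarrow> x"
  shows "z \<longlonglongrightarrow> x"
proof -
  have x_dom: "x \<in> edom Phi"
    using x(2) int_dom_subset by blast
  obtain L where L: "(\<lambda>k. breg x (z k)) \<longlonglongrightarrow> L"
    using decseq_convergent[OF decseq_breg_zero[OF x(1)]] breg_nonneg[OF z_in_int_dom x_dom] by blast
  have zr: "(\<lambda>n. z (r n)) \<longlonglongrightarrow> x"
    using r(2) by (simp add: o_def)
  have "(\<lambda>n. breg x (z (r n))) \<longlonglongrightarrow> phi x - phi x - grad x \<bullet> (x - x)"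
    unfolding breg_def
    by (intro tendsto_intros zr isCont_tendsto_compose[OF isCont_phi[OF x(2)] zr]
        isCont_tendsto_compose[OF isCont_grad[OF x(2)] zr])
  moreover have "(\<lambda>n. breg x (z (r n))) \<longlonglongrightarrow> L"
    using LIMSEQ_subseq_LIMSEQ[OF L r(1)] by (simp add: o_def)
  ultimately have "L = 0"
    using LIMSEQ_unique by fastforce
  then have diff_lim: "(\<lambda>k. x - z k) \<longlonglongrightarrow> 0"
    using breg_tendsto_0_imp_tendsto_diff[OF K(1,2) _ _ L[unfolded \<open>L = 0\<close>]] K(3) x_dom by blast
  show ?thesis
    using tendsto_diff[OF tendsto_const[of x] diff_lim] by simp
qed

end

theorem mainTheorem5:
  fixes Phi :: "'a::euclidean_space \<Rightarrow> ereal"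
    and T :: "'a \<Rightarrow> 'a set"
    and z p w :: "nat \<Rightarrow> 'a"
    and sigma_seq rho_seq :: "nat \<Rightarrow> real"
    and sigma rho :: real
  assumes legendre: "legendre Phi"
    and maxmono: "maximal_monotone T"
    and dom_meet: "interior (edom Phi) \<inter> op_dom T \<noteq> {}"
    and z0: "z 0 \<in> interior (edom Phi)"
    and sigma_pos: "0 < sigma"
    and sigma_ge: "\<And>k. sigma \<le> sigma_seq k"
    and rho_lt: "rho < 1"
    and rho_bounds: "\<And>k. 0 \<le> rho_seq k \<and> rho_seq k \<le> rho"
    and p_dom: "\<And>k. p k \<in> edom Phi"
    and w_in: "\<And>k. w k \<in> T (p k)"
    and step_dom: "\<And>k. egrad Phi (z k) - sigma_seq k *\<^sub>R w k \<in> interior (edom (conj_fun Phi))"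
    and step: "\<And>k. z (Suc k) = egrad (conj_fun Phi) (egrad Phi (z k) - sigma_seq k *\<^sub>R w k)"
    and z_int: "\<And>k. z (Suc k) \<in> interior (edom Phi)"
    and inexact: "\<And>k. bregman Phi (p k) (z (Suc k)) \<le> ereal (rho_seq k) * bregman Phi (p k) (z k)"
    and zstar: "\<exists>zs \<in> zer T \<inter> interior (edom Phi). coercive (bregman Phi zs)"
  shows "\<exists>zinf \<in> zer T \<inter> interior (edom Phi).
           z \<longlonglongrightarrow> zinf \<and> p \<longlonglongrightarrow> zinf \<and> w \<longlonglongrightarrow> 0"
proof -
  interpret inexact_bregman_ppa Phi T z p w sigma_seq rho_seq sigma rho
    by unfold_locales
      (fact legendre maxmono z0 sigma_pos sigma_ge rho_lt rho_bounds p_dom w_in step_dom step z_int inexact)+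
  obtain zs where zs: "zs \<in> zer T" "zs \<in> interior (edom Phi)" "coercive (bregman Phi zs)"
    using zstar by blast
  define K where "K = closure (range z)"
  have K: "compact K" "K \<subseteq> interior (edom Phi)" "range z \<subseteq> K"
    using iterates_closure_compact[OF zs] closure_subset[of "range z"] unfolding K_def by auto
  have "zs \<in> edom Phi"
    using zs(2) interior_subset by blast
  then have pz: "(\<lambda>k. p k - z k) \<longlonglongrightarrow> 0" and w: "w \<longlonglongrightarrow> 0"
    using iterates_differences_tendsto_0[OF K zs(1)] w_tendsto_0[OF K] by blast+
  obtain zinf r where "zinf \<in> K" and r: "strict_mono r" "(z \<circ> r) \<longlonglongrightarrow> zinf"
    using seq_compactE[OF compact_imp_seq_compact[OF K(1)]] K(3) by blast
  then have zinf: "zinf \<in> zer T" "zinf \<in> interior (edom Phi)"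
    using cluster_point_in_zer[OF r pz w] K(2) by auto
  have z_lim: "z \<longlonglongrightarrow> zinf"
    by (rule tendsto_zero_cluster_point[OF K zinf r])
  moreover have "p \<longlonglongrightarrow> zinf"
    using tendsto_add[OF pz z_lim] by simp
  ultimately show ?thesis
    using zinf w by blast
qed

end
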